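(* Let $A$ and $B$ be finite-dimensional quantum systems of dimensions $d_A$ and $d_B$, and let $U$ and $V$ be unitary operators on $AB$, with respective operator-Schmidt coefficients $u_j$ and $v_j$, each ordered into decreasing order ($u_1\geq u_2\geq\cdots$ and $v_1\geq v_2\geq\cdots$). Then $$2\left(1-\frac{\sum_j u_j v_j}{d_A d_B}\right)\leq \|U-V\|^2,$$ where $\|M\|=\max_{\|\psi\|=1}\|M|\psi\rangle\|$ is the operator norm.
   Context: The Hilbert–Schmidt inner product on operators is $(Q,P)=\mathrm{tr}(Q^\dagger P)$; an orthonormal operator basis is a set $\{Q_j\}$ with $\mathrm{tr}(Q_j^\dagger Q_k)=\delta_{jk}$. Every operator $Q$ on $AB$ has an operator-Schmidt decomposition $Q=\sum_l q_l A_l\otimes B_l$ with $q_l\geq 0$ and $\{A_l\}$, $\{B_l\}$ orthonormal operator bases for $A$ and $B$ respectively; the numbers $q_l$ (the singular values of the coefficient matrix of $Q$ in product operator bases) are the operator-Schmidt coefficients of $Q$. *)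

theory Defs
  imports "HOL-Analysis.Analysis"
begin

text \<open>Operators on a finite-dimensional system with basis indexed by the finite type 'n
  are complex matrices of type complex^'n^'n. The composite system AB has index type 'a \<times> 'b.\<close>

definition cadj :: "complex^'n^'m \<Rightarrow> complex^'m^'n" where
  "cadj M = (\<chi> i j. cnj (M $ j $ i))"

definition hs_inner :: "complex^'n^'n \<Rightarrow> complex^'n^'n \<Rightarrow> complex" where
  "hs_inner Q P = trace (cadj Q ** P)"

definition kron :: "complex^'a^'a \<Rightarrow> complex^'b^'b \<Rightarrow> complex^('a \<times> 'b)^('a \<times> 'b)" where
  "kron X Y = (\<chi> p r. X $ fst p $ fst r * Y $ snd p $ snd r)"

definition unitary :: "complex^'n^'n \<Rightarrow> bool" where
  "unitary U \<longleftrightarrow> cadj U ** U = mat 1 \<and> U ** cadj U = mat 1"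

text \<open>An orthonormal operator basis, given as a family indexed by l < dim^2
  (dim^2 orthonormal operators in a dim^2-dimensional space).\<close>
definition orthonormal_op_basis :: "(nat \<Rightarrow> complex^'n^'n) \<Rightarrow> bool" where
  "orthonormal_op_basis E \<longleftrightarrow>
     (\<forall>j < CARD('n)^2. \<forall>k < CARD('n)^2. hs_inner (E j) (E k) = (if j = k then 1 else 0))"

definition op_schmidt_coeffs :: "complex^('a::finite \<times> 'b::finite)^('a \<times> 'b) \<Rightarrow> (nat \<Rightarrow> real) \<Rightarrow> bool" where
  "op_schmidt_coeffs Q q \<longleftrightarrow>
     (let N = min (CARD('a)^2) (CARD('b)^2) in
      (\<exists>(A :: nat \<Rightarrow> complex^'a^'a) (B :: nat \<Rightarrow> complex^'b^'b).
          orthonormal_op_basis A \<and> orthonormal_op_basis B \<and>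
          (\<forall>l < N. q l \<ge> 0) \<and>
          Q = (\<Sum>l<N. q l *\<^sub>R kron (A l) (B l))) \<and>
      (\<forall>i j. i \<le> j \<and> j < N \<longrightarrow> q j \<le> q i))"

definition op_norm :: "complex^'n^'m \<Rightarrow> real" where
  "op_norm M = Sup {norm (M *v \<psi>) | \<psi>. norm \<psi> = 1}"

end

theory Submission
  imports Defs
begin

text \<open>Writing d = d_A d_B, the Hilbert-Schmidt norm satisfies
  (U - V, U - V) = 2 d - 2 Re (U, V) for unitaries, and (M, M) <= d ||M||^2 since each of
  the d columns of M has length at most ||M||. Inserting the operator-Schmidt decompositions
  gives (U, V) = sum_{l,m} u_l v_m P_lm Q_lm with P_lm = (A_l, A'_m) and Q_lm = (B_l, B'_m).
  By Bessel's inequality the matrices |P_lm|^2 and |Q_lm|^2 are doubly substochastic, hence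
  so is their average, which dominates |P_lm Q_lm|. Finally, for a doubly substochastic W
  and decreasing nonnegative u, v, sum_{l,m} u_l v_m W_lm <= sum_l u_l v_l: writing u and v
  as nonnegative combinations of indicators of initial segments reduces this to the case
  of indicators, where it says that a block of W has total weight at most its diagonal
  length.\<close>

definition cscale :: "complex \<Rightarrow> complex^'n^'m \<Rightarrow> complex^'n^'m" where
  "cscale c M = (\<chi> i j. c * M $ i $ j)"

lemma hs_inner_eq_sum: "hs_inner Q P = (\<Sum>i\<in>UNIV. \<Sum>k\<in>UNIV. cnj (Q $ k $ i) * P $ k $ i)"
  by (simp add: hs_inner_def trace_def matrix_matrix_mult_def cadj_def)

lemma hs_inner_add_left: "hs_inner (Q + Q') P = hs_inner Q P + hs_inner Q' P"
  and hs_inner_add_right: "hs_inner P (Q + Q') = hs_inner P Q + hs_inner P Q'"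
  and hs_inner_diff_left: "hs_inner (Q - Q') P = hs_inner Q P - hs_inner Q' P"
  and hs_inner_diff_right: "hs_inner P (Q - Q') = hs_inner P Q - hs_inner P Q'"
  and hs_inner_zero_left: "hs_inner 0 P = 0"
  and hs_inner_zero_right: "hs_inner P 0 = 0"
  by (simp_all add: hs_inner_eq_sum algebra_simps sum.distrib sum_subtractf)

lemma hs_inner_sum_left: "hs_inner (\<Sum>s\<in>S. f s) P = (\<Sum>s\<in>S. hs_inner (f s) P)"
  and hs_inner_sum_right: "hs_inner P (\<Sum>s\<in>S. f s) = (\<Sum>s\<in>S. hs_inner P (f s))"
  by (induction S rule: infinite_finite_induct)
    (simp_all add: hs_inner_zero_left hs_inner_zero_right hs_inner_add_left hs_inner_add_right)

lemma hs_inner_cscale_left: "hs_inner (cscale c Q) P = cnj c * hs_inner Q P"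
  and hs_inner_cscale_right: "hs_inner P (cscale c Q) = c * hs_inner P Q"
  by (simp_all add: hs_inner_eq_sum cscale_def sum_distrib_left algebra_simps)

lemma hs_inner_scaleR_left: "hs_inner (r *\<^sub>R Q) P = of_real r * hs_inner Q P"
  and hs_inner_scaleR_right: "hs_inner P (r *\<^sub>R Q) = of_real r * hs_inner P Q"
  by (simp_all add: hs_inner_eq_sum sum_distrib_left scaleR_conv_of_real[where 'a=complex]
      algebra_simps del: of_real_def)

lemma cnj_hs_inner: "cnj (hs_inner Q P) = hs_inner P Q"
  by (simp add: hs_inner_eq_sum mult.commute)

lemma norm_hs_inner_commute: "cmod (hs_inner Q P) = cmod (hs_inner P Q)"
  by (metis cnj_hs_inner complex_mod_cnj)

lemma hs_inner_self: "hs_inner Q Q = of_real (\<Sum>i\<in>UNIV. \<Sum>k\<in>UNIV. (cmod (Q $ k $ i))\<^sup>2)"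
  by (simp add: hs_inner_eq_sum of_real_sum complex_norm_square mult.commute del: of_real_power)

lemma Re_hs_inner_self_nonneg: "0 \<le> Re (hs_inner Q Q)"
  by (simp add: hs_inner_self sum_nonneg)

lemma sum_UNIV_prod:
  "(\<Sum>p\<in>UNIV. f p) = (\<Sum>a\<in>UNIV. \<Sum>b\<in>UNIV. f (a, b))" for f :: "'a::finite \<times> 'b::finite \<Rightarrow> 'c::comm_monoid_add"
  by (simp add: sum.cartesian_product)

lemma hs_inner_kron: "hs_inner (kron A B) (kron C D) = hs_inner A C * hs_inner B D"
proof -
  have "hs_inner (kron A B) (kron C D) =
     (\<Sum>i\<in>UNIV. \<Sum>j\<in>UNIV. \<Sum>k\<in>UNIV. \<Sum>l\<in>UNIV.
        (cnj (A $ k $ i) * C $ k $ i) * (cnj (B $ l $ j) * D $ l $ j))"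
    by (simp add: hs_inner_eq_sum kron_def sum_UNIV_prod algebra_simps)
  also have "\<dots> = hs_inner A C * hs_inner B D"
    by (simp only: hs_inner_eq_sum sum_product)
  finally show ?thesis .
qed

lemma hs_inner_unitary_self: "unitary U \<Longrightarrow> hs_inner U U = of_nat CARD('n)"
  for U :: "complex^'n^'n"
  by (simp add: unitary_def hs_inner_def trace_def mat_def)

lemma bessel_inequality:
  fixes E :: "nat \<Rightarrow> complex^'n^'n"
  assumes E: "orthonormal_op_basis E" and N: "N \<le> CARD('n)^2"
  shows "(\<Sum>m<N. (cmod (hs_inner (E m) X))\<^sup>2) \<le> Re (hs_inner X X)"
proof -
  define c where "c m = hs_inner (E m) X" for m
  define h where "h = (\<Sum>m<N. cscale (c m) (E m))"
  define S where "S = (\<Sum>m<N. (cmod (c m))\<^sup>2)"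
  have orth: "hs_inner (E k) (E m) = (if k = m then 1 else 0)" if "k < N" "m < N" for k m
    using E N that unfolding orthonormal_op_basis_def by auto
  have "hs_inner (E k) h = c k" if "k < N" for k
    using that by (simp add: h_def hs_inner_sum_right hs_inner_cscale_right orth if_distrib cong: if_cong)
  then have hh: "hs_inner h h = of_real S"
    by (simp add: h_def S_def hs_inner_sum_left hs_inner_cscale_left of_real_sum
        complex_norm_square mult.commute del: of_real_power)
  have hX: "hs_inner h X = of_real S"
    by (simp add: h_def S_def hs_inner_sum_left hs_inner_cscale_left c_def of_real_sum
        complex_norm_square mult.commute del: of_real_power)
  then have Xh: "hs_inner X h = of_real S"
    by (metis cnj_hs_inner complex_cnj_complex_of_real)
  have "hs_inner (X - h) (X - h) = hs_inner X X - of_real S"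
    by (simp add: hs_inner_diff_left hs_inner_diff_right hX Xh hh)
  with Re_hs_inner_self_nonneg[of "X - h"] show ?thesis
    by (simp add: S_def c_def)
qed

lemma norm_axis_complex: "norm (axis i (1::complex)) = 1"
  by (simp add: inner_axis' norm_eq_1)

lemma norm_matrix_vector_mult_le_op_norm:
  fixes M :: "complex^'n^'m"
  assumes "norm \<psi> = 1"
  shows "norm (M *v \<psi>) \<le> op_norm M"
  unfolding op_norm_def
proof (rule cSup_upper)
  obtain K where "\<And>x. norm (M *v x) \<le> norm x * K"
    using bounded_linear.bounded[OF matrix_vector_mul_bounded_linear] by blast
  then have "\<And>x. norm x = 1 \<Longrightarrow> norm (M *v x) \<le> K"
    by (metis mult_1_left)
  then show "bdd_above {norm (M *v \<psi>) |\<psi>. norm \<psi> = 1}"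
    by (intro bdd_aboveI[of _ K]) auto
qed (use assms in blast)

lemma Re_hs_inner_self_eq_sum_column:
  "Re (hs_inner M M) = (\<Sum>i\<in>UNIV. (norm (M *v axis i 1))\<^sup>2)" for M :: "complex^'n^'n"
  by (simp add: hs_inner_self norm_vec_def L2_set_def sum_nonneg matrix_vector_mult_def axis_def
      if_distrib cong: if_cong)

lemma Re_hs_inner_self_le_op_norm:
  fixes M :: "complex^'n^'n"
  shows "Re (hs_inner M M) \<le> CARD('n) * (op_norm M)\<^sup>2"
proof -
  have "Re (hs_inner M M) \<le> (\<Sum>i\<in>(UNIV::'n set). (op_norm M)\<^sup>2)"
    unfolding Re_hs_inner_self_eq_sum_column
    by (intro sum_mono power_mono norm_matrix_vector_mult_le_op_norm norm_axis_complex norm_ge_zero)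
  then show ?thesis by simp
qed

lemma sum_lessThan_by_parts:
  fixes u c :: "nat \<Rightarrow> 'a::comm_ring"
  shows "(\<Sum>l<N. u l * c l) = (\<Sum>i<N. (u i - u (Suc i)) * (\<Sum>l\<le>i. c l)) + u N * (\<Sum>l<N. c l)"
proof (induction N)
  case (Suc N)
  have "(\<Sum>l\<le>N. c l) = (\<Sum>l<N. c l) + c N"
    by (simp flip: lessThan_Suc_atMost)
  with Suc show ?case
    by (simp add: algebra_simps del: lessThan_Suc_atMost)
qed simp

text \<open>Layer-cake weights: u i - u (i + 1), with u N read as 0, so that
  u l is the sum of the weights of the layers i with l \<le> i < N.\<close>

definition layer_weight :: "nat \<Rightarrow> (nat \<Rightarrow> real) \<Rightarrow> nat \<Rightarrow> real" where
  "layer_weight N u i = u i - (if Suc i < N then u (Suc i) else 0)"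

lemma layer_weight_nonneg:
  assumes "antimono_on {..<N} u" "\<And>l. l < N \<Longrightarrow> 0 \<le> u l" "i < N"
  shows "0 \<le> layer_weight N u i"
  using assms by (auto simp: layer_weight_def monotone_on_def)

lemma sum_mult_eq_sum_layer_weight:
  "(\<Sum>l<N. u l * c l) = (\<Sum>i<N. layer_weight N u i * (\<Sum>l\<le>i. c l))"
proof -
  define u' where "u' i = (if i < N then u i else 0)" for i
  have "(\<Sum>l<N. u l * c l) = (\<Sum>l<N. u' l * c l)"
    by (simp add: u'_def)
  also have "\<dots> = (\<Sum>i<N. (u' i - u' (Suc i)) * (\<Sum>l\<le>i. c l))"
    by (subst sum_lessThan_by_parts) (simp add: u'_def)
  also have "\<dots> = (\<Sum>i<N. layer_weight N u i * (\<Sum>l\<le>i. c l))"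
    by (simp add: u'_def layer_weight_def)
  finally show ?thesis .
qed

lemma double_sum_eq_sum_layer_weight:
  "(\<Sum>l<N. \<Sum>m<N. u l * v m * W l m) =
     (\<Sum>i<N. \<Sum>k<N. layer_weight N u i * layer_weight N v k * (\<Sum>l\<le>i. \<Sum>m\<le>k. W l m))"
proof -
  have "(\<Sum>l<N. \<Sum>m<N. u l * v m * W l m) = (\<Sum>l<N. u l * (\<Sum>m<N. v m * W l m))"
    by (simp add: sum_distrib_left mult.assoc)
  also have "\<dots> = (\<Sum>l<N. u l * (\<Sum>k<N. layer_weight N v k * (\<Sum>m\<le>k. W l m)))"
    by (subst sum_mult_eq_sum_layer_weight) (rule refl)
  also have "\<dots> = (\<Sum>i<N. layer_weight N u i * (\<Sum>l\<le>i. \<Sum>k<N. layer_weight N v k * (\<Sum>m\<le>k. W l m)))"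
    by (rule sum_mult_eq_sum_layer_weight)
  also have "\<dots> = (\<Sum>i<N. \<Sum>k<N. layer_weight N u i * layer_weight N v k * (\<Sum>l\<le>i. \<Sum>m\<le>k. W l m))"
    by (simp add: sum_distrib_left mult.assoc sum.swap[of _ "{.._}" "{..<N}"])
  finally show ?thesis .
qed

definition doubly_substochastic :: "nat \<Rightarrow> (nat \<Rightarrow> nat \<Rightarrow> real) \<Rightarrow> bool" where
  "doubly_substochastic N W \<longleftrightarrow>
     (\<forall>l<N. \<forall>m<N. 0 \<le> W l m) \<and> (\<forall>l<N. (\<Sum>m<N. W l m) \<le> 1) \<and> (\<forall>m<N. (\<Sum>l<N. W l m) \<le> 1)"

lemma doubly_substochastic_midpoint:
  assumes "doubly_substochastic N W" "doubly_substochastic N W'"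
  shows "doubly_substochastic N (\<lambda>l m. (W l m + W' l m) / 2)"
  using assms
  by (auto simp: doubly_substochastic_def sum.distrib sum_divide_distrib[symmetric]
      intro: add_mono[where b=1 and d="1::real", simplified])

lemma doubly_substochastic_block_sum_le:
  assumes W: "doubly_substochastic N W" and "i < N" "k < N"
  shows "(\<Sum>l\<le>i. \<Sum>m\<le>k. W l m) \<le> Suc (min i k)"
proof -
  have W0: "0 \<le> W l m" if "l < N" "m < N" for l m
    using W that assms by (simp add: doubly_substochastic_def)
  have "(\<Sum>l\<le>i. \<Sum>m\<le>k. W l m) \<le> (\<Sum>l\<le>i. \<Sum>m<N. W l m)"
    using assms W0 by (intro sum_mono sum_mono2) auto
  also have "\<dots> \<le> (\<Sum>l\<le>i. 1)"
    using W assms by (intro sum_mono) (simp add: doubly_substochastic_def)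
  finally have row: "(\<Sum>l\<le>i. \<Sum>m\<le>k. W l m) \<le> Suc i" by simp
  have "(\<Sum>l\<le>i. \<Sum>m\<le>k. W l m) = (\<Sum>m\<le>k. \<Sum>l\<le>i. W l m)"
    by (rule sum.swap)
  also have "\<dots> \<le> (\<Sum>m\<le>k. \<Sum>l<N. W l m)"
    using assms W0 by (intro sum_mono sum_mono2) auto
  also have "\<dots> \<le> (\<Sum>m\<le>k. 1)"
    using W assms by (intro sum_mono) (simp add: doubly_substochastic_def)
  finally have col: "(\<Sum>l\<le>i. \<Sum>m\<le>k. W l m) \<le> Suc k" by simp
  from row col show ?thesis
    by (simp add: min_def)
qed

lemma block_sum_delta: "(\<Sum>l\<le>i. \<Sum>m\<le>k. of_bool (l = m) :: real) = Suc (min i k)"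
proof -
  have "(\<Sum>l\<le>i. \<Sum>m\<le>k. of_bool (l = m) :: real) = (\<Sum>l\<le>i. of_bool (l \<le> k))"
    by (simp add: of_bool_def)
  also have "\<dots> = card ({..i} \<inter> {..k})"
    by (simp add: sum_of_bool_eq atMost_def)
  finally show ?thesis
    by (simp add: min_def Int_absorb1 Int_absorb2)
qed

theorem doubly_substochastic_rearrangement:
  assumes W: "doubly_substochastic N W"
    and u: "antimono_on {..<N} u" "\<And>l. l < N \<Longrightarrow> 0 \<le> u l"
    and v: "antimono_on {..<N} v" "\<And>l. l < N \<Longrightarrow> 0 \<le> v l"
  shows "(\<Sum>l<N. \<Sum>m<N. u l * v m * W l m) \<le> (\<Sum>l<N. u l * v l)"
proof -
  have "(\<Sum>l<N. \<Sum>m<N. u l * v m * W l m) =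
      (\<Sum>i<N. \<Sum>k<N. layer_weight N u i * layer_weight N v k * (\<Sum>l\<le>i. \<Sum>m\<le>k. W l m))"
    by (rule double_sum_eq_sum_layer_weight)
  also have "\<dots> \<le> (\<Sum>i<N. \<Sum>k<N. layer_weight N u i * layer_weight N v k * Suc (min i k))"
    by (intro sum_mono mult_left_mono doubly_substochastic_block_sum_le[OF W]
        mult_nonneg_nonneg layer_weight_nonneg u v) auto
  \<comment> \<open>The identity matrix attains every block bound, recovering the diagonal sum.\<close>
  also have "\<dots> = (\<Sum>l<N. \<Sum>m<N. u l * v m * of_bool (l = m))"
    using double_sum_eq_sum_layer_weight[where N=N and u=u and v=v and W="\<lambda>l m. of_bool (l = m)"]
    by (simp only: block_sum_delta)
  also have "\<dots> = (\<Sum>l<N. u l * v l)"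
    by (simp add: if_distrib cong: if_cong)
  finally show ?thesis .
qed

lemma orthonormal_op_basis_overlaps_doubly_substochastic:
  fixes E F :: "nat \<Rightarrow> complex^'n^'n"
  assumes E: "orthonormal_op_basis E" and F: "orthonormal_op_basis F" and N: "N \<le> CARD('n)^2"
  shows "doubly_substochastic N (\<lambda>l m. (cmod (hs_inner (E l) (F m)))\<^sup>2)"
proof -
  have unit: "Re (hs_inner (G l) (G l)) = 1" if "orthonormal_op_basis G" "l < N"
    for G :: "nat \<Rightarrow> complex^'n^'n" and l
    using that N unfolding orthonormal_op_basis_def by auto
  have "(\<Sum>m<N. (cmod (hs_inner (E l) (F m)))\<^sup>2) \<le> 1" if "l < N" for l
    using bessel_inequality[OF F N, of "E l"] unit[OF E that]
    by (subst norm_hs_inner_commute) simp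
  moreover have "(\<Sum>l<N. (cmod (hs_inner (E l) (F m)))\<^sup>2) \<le> 1" if "m < N" for m
    using bessel_inequality[OF E N, of "F m"] unit[OF F that] by simp
  ultimately show ?thesis
    by (simp add: doubly_substochastic_def)
qed

lemma hs_inner_operator_schmidt_sums:
  "hs_inner (\<Sum>l<N. u l *\<^sub>R kron (A l) (B l)) (\<Sum>m<N. v m *\<^sub>R kron (A' m) (B' m)) =
     (\<Sum>l<N. \<Sum>m<N. of_real (u l * v m) * (hs_inner (A l) (A' m) * hs_inner (B l) (B' m)))"
  by (simp add: hs_inner_sum_left hs_inner_sum_right hs_inner_scaleR_left hs_inner_scaleR_right
      hs_inner_kron sum_distrib_left mult_ac) (rule sum.swap)

lemma Re_hs_inner_operator_schmidt_le:
  fixes A A' :: "nat \<Rightarrow> complex^'a^'a" and B B' :: "nat \<Rightarrow> complex^'b^'b"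
  assumes "orthonormal_op_basis A" "orthonormal_op_basis A'" "N \<le> CARD('a)^2"
    and "orthonormal_op_basis B" "orthonormal_op_basis B'" "N \<le> CARD('b)^2"
    and u: "antimono_on {..<N} u" "\<And>l. l < N \<Longrightarrow> 0 \<le> u l"
    and v: "antimono_on {..<N} v" "\<And>l. l < N \<Longrightarrow> 0 \<le> v l"
  shows "Re (hs_inner (\<Sum>l<N. u l *\<^sub>R kron (A l) (B l)) (\<Sum>m<N. v m *\<^sub>R kron (A' m) (B' m)))
           \<le> (\<Sum>l<N. u l * v l)"
proof -
  define P where "P l m = cmod (hs_inner (A l) (A' m))" for l m
  define Q where "Q l m = cmod (hs_inner (B l) (B' m))" for l m
  have W: "doubly_substochastic N (\<lambda>l m. ((P l m)\<^sup>2 + (Q l m)\<^sup>2) / 2)"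
    unfolding P_def Q_def
    by (intro doubly_substochastic_midpoint orthonormal_op_basis_overlaps_doubly_substochastic assms)
  have "Re (hs_inner (\<Sum>l<N. u l *\<^sub>R kron (A l) (B l)) (\<Sum>m<N. v m *\<^sub>R kron (A' m) (B' m)))
      \<le> (\<Sum>l<N. \<Sum>m<N. cmod (of_real (u l * v m) * (hs_inner (A l) (A' m) * hs_inner (B l) (B' m))))"
    unfolding hs_inner_operator_schmidt_sums
    by (intro order_trans[OF complex_Re_le_cmod] order_trans[OF norm_sum] sum_mono norm_sum)
  also have "\<dots> = (\<Sum>l<N. \<Sum>m<N. u l * v m * (P l m * Q l m))"
    using u(2) v(2) by (intro sum.cong refl) (simp add: P_def Q_def norm_mult)
  also have "\<dots> \<le> (\<Sum>l<N. \<Sum>m<N. u l * v m * (((P l m)\<^sup>2 + (Q l m)\<^sup>2) / 2))"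
  proof -
    have "P l m * Q l m \<le> ((P l m)\<^sup>2 + (Q l m)\<^sup>2) / 2" for l m
      using sum_squares_bound[of "P l m" "Q l m"] by simp
    then show ?thesis
      using u(2) v(2) by (intro sum_mono mult_left_mono) auto
  qed
  also have "\<dots> \<le> (\<Sum>l<N. u l * v l)"
    by (rule doubly_substochastic_rearrangement[OF W u v])
  finally show ?thesis .
qed

lemma Re_hs_inner_diff_self_unitary:
  fixes U V :: "complex^'n^'n"
  assumes "unitary U" "unitary V"
  shows "Re (hs_inner (U - V) (U - V)) = 2 * CARD('n) - 2 * Re (hs_inner U V)"
proof -
  have "hs_inner V U = cnj (hs_inner U V)"
    by (simp add: cnj_hs_inner)
  then show ?thesis
    by (simp add: hs_inner_diff_left hs_inner_diff_right hs_inner_unitary_self[OF assms(1)]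
        hs_inner_unitary_self[OF assms(2)])
qed

theorem proposition1:
  fixes U V :: "complex^('a::finite \<times> 'b::finite)^('a \<times> 'b)"
    and u v :: "nat \<Rightarrow> real"
  assumes "unitary U" and "unitary V"
    and "op_schmidt_coeffs U u" and "op_schmidt_coeffs V v"
  shows "2 * (1 - (\<Sum>j < min (CARD('a)^2) (CARD('b)^2). u j * v j) / (CARD('a) * CARD('b)))
           \<le> (op_norm (U - V))^2"
proof -
  define N where "N = min (CARD('a)^2) (CARD('b)^2)"
  define d where "d = real CARD('a \<times> 'b)"
  obtain A B where AB: "orthonormal_op_basis A" "orthonormal_op_basis B"
    and u: "\<forall>l<N. 0 \<le> u l" "\<forall>i j. i \<le> j \<and> j < N \<longrightarrow> u j \<le> u i"
    and U: "U = (\<Sum>l<N. u l *\<^sub>R kron (A l) (B l))"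
    using assms(3) unfolding op_schmidt_coeffs_def Let_def N_def by blast
  obtain A' B' where A'B': "orthonormal_op_basis A'" "orthonormal_op_basis B'"
    and v: "\<forall>l<N. 0 \<le> v l" "\<forall>i j. i \<le> j \<and> j < N \<longrightarrow> v j \<le> v i"
    and V: "V = (\<Sum>l<N. v l *\<^sub>R kron (A' l) (B' l))"
    using assms(4) unfolding op_schmidt_coeffs_def Let_def N_def by blast
  have "Re (hs_inner U V) \<le> (\<Sum>l<N. u l * v l)"
    unfolding U V using AB A'B' u v
    by (intro Re_hs_inner_operator_schmidt_le) (auto simp: N_def monotone_on_def)
  then have "2 * d - 2 * (\<Sum>l<N. u l * v l) \<le> d * (op_norm (U - V))\<^sup>2"
    using Re_hs_inner_self_le_op_norm[of "U - V"] Re_hs_inner_diff_self_unitary[OF assms(1,2)]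
    by (simp add: d_def)
  moreover have "d = real CARD('a) * real CARD('b)" "0 < d"
    by (simp_all add: d_def card_prod)
  ultimately show ?thesis
    by (simp add: N_def field_simps)
qed

end
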